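(* Let $d\in\{2,3\}$, $r>\frac{d+1}{2}$, $\beta>0$, and let $\mathbf u\in H_{\mathbb C}$ with $\|A^{1/4}\mathbf u\|_\beta<\infty$. Then $$|\langle B(\mathbf u,\mathbf u),A^{r}e^{2\beta A^{1/2}}\mathbf u\rangle|\le C\,2^r C_W(r)\,\|\mathbf u\|_\beta\,\|A^{1/4}\mathbf u\|_\beta^2,$$ where $C>0$ depends only on $d$.
   Context: Periodic domain $\Omega=[0,2\pi]^d$, $H$ = real mean-zero divergence-free $L^2$ vector fields, $H_{\mathbb C}=H+iH$ with sesquilinear $L^2$ inner product $\langle\cdot,\cdot\rangle$. $A=-\Delta$, acting by multiplication by $|\mathbf k|^2$ on Fourier coefficients; $A^s$ and $e^{\beta A^{1/2}}$ act by $|\mathbf k|^{2s}$ and $e^{\beta|\mathbf k|}$. $\|\mathbf f\|_\beta=\|A^{r/2}e^{\beta A^{1/2}}\mathbf f\|$. $B(\mathbf u,\mathbf v)=\mathbb P(\mathbf u\cdot\nabla\mathbf v)$ with $\mathbb P$ the Leray–Helmholtz projection, extended complex-bilinearly. $C_W(r)=\frac{1}{\pi 2^{d-1}}\frac{2r-d}{2r-1-d}$. *)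

theory Defs
  imports "HOL-Analysis.Analysis"
begin

text \<open>Fourier-side model on the torus [0,2pi]^d, d = CARD('n).
  A vector field f is represented by its Fourier coefficients
  f :: int^'n => complex^'n, with f(x) = sum_k f k * e^{i k.x}.\<close>

definition wnorm :: "int^'n::finite \<Rightarrow> real" where
  "wnorm k = sqrt (\<Sum>i\<in>UNIV. (real_of_int (k$i))^2)"

definition kvec :: "int^'n::finite \<Rightarrow> complex^'n" where
  "kvec k = (\<chi> i. complex_of_int (k$i))"

definition kdot :: "int^'n::finite \<Rightarrow> complex^'n \<Rightarrow> complex" where
  "kdot k w = (\<Sum>i\<in>UNIV. complex_of_int (k$i) * w$i)"

definition cdot :: "complex^'n::finite \<Rightarrow> complex^'n \<Rightarrow> complex" where
  "cdot v w = (\<Sum>i\<in>UNIV. v$i * cnj (w$i))"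

text \<open>H_C: mean-zero, divergence-free, square-integrable (complex) fields\<close>
definition in_HC :: "(int^'n::finite \<Rightarrow> complex^'n) \<Rightarrow> bool" where
  "in_HC u \<longleftrightarrow> u 0 = 0 \<and> (\<forall>k. kdot k (u k) = 0) \<and>
     (\<lambda>k. (norm (u k))^2) summable_on UNIV"

text \<open>L^2 inner product via Parseval\<close>
definition L2inner :: "(int^'n::finite \<Rightarrow> complex^'n) \<Rightarrow> (int^'n \<Rightarrow> complex^'n) \<Rightarrow> complex" where
  "L2inner f g = complex_of_real ((2*pi)^CARD('n)) * (\<Sum>\<^sub>\<infinity>k. cdot (f k) (g k))"

definition Apow :: "real \<Rightarrow> (int^'n::finite \<Rightarrow> complex^'n) \<Rightarrow> (int^'n \<Rightarrow> complex^'n)" where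
  "Apow e f = (\<lambda>k. complex_of_real (wnorm k powr (2*e)) *s f k)"

definition expA :: "real \<Rightarrow> (int^'n::finite \<Rightarrow> complex^'n) \<Rightarrow> (int^'n \<Rightarrow> complex^'n)" where
  "expA \<beta> f = (\<lambda>k. complex_of_real (exp (\<beta> * wnorm k)) *s f k)"

definition L2norm :: "(int^'n::finite \<Rightarrow> complex^'n) \<Rightarrow> real" where
  "L2norm f = sqrt ((2*pi)^CARD('n) * (\<Sum>\<^sub>\<infinity>k. (norm (f k))^2))"

definition gnorm :: "real \<Rightarrow> real \<Rightarrow> (int^'n::finite \<Rightarrow> complex^'n) \<Rightarrow> real" where
  "gnorm r \<beta> f = L2norm (Apow (r/2) (expA \<beta> f))"

definition gfinite :: "real \<Rightarrow> real \<Rightarrow> (int^'n::finite \<Rightarrow> complex^'n) \<Rightarrow> bool" where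
  "gfinite r \<beta> f \<longleftrightarrow> (\<lambda>k. (norm (Apow (r/2) (expA \<beta> f) k))^2) summable_on UNIV"

text \<open>Fourier coefficients of u . grad v: sum over j + l = k of (u(j) . i l) v(l)\<close>
definition advect :: "(int^'n::finite \<Rightarrow> complex^'n) \<Rightarrow> (int^'n \<Rightarrow> complex^'n) \<Rightarrow> (int^'n \<Rightarrow> complex^'n)" where
  "advect u v = (\<lambda>k. \<Sum>\<^sub>\<infinity>j. (\<i> * kdot (k - j) (u j)) *s v (k - j))"

definition leray :: "(int^'n::finite \<Rightarrow> complex^'n) \<Rightarrow> (int^'n \<Rightarrow> complex^'n)" where
  "leray f = (\<lambda>k. if k = 0 then 0
      else f k - (kdot k (f k) / complex_of_real ((wnorm k)^2)) *s kvec k)"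

definition Bop :: "(int^'n::finite \<Rightarrow> complex^'n) \<Rightarrow> (int^'n \<Rightarrow> complex^'n) \<Rightarrow> (int^'n \<Rightarrow> complex^'n)" where
  "Bop u v = leray (advect u v)"

definition CW :: "nat \<Rightarrow> real \<Rightarrow> real" where
  "CW d r = 1 / (pi * 2^(d-1)) * ((2*r - real d) / (2*r - 1 - real d))"

end

theory Submission
  imports Defs
begin

text \<open>
  No cancellation in the nonlinear term is used: the pairing is estimated on the Fourier side in
  absolute value. For k = j + (k - j) the weight |k|^(2r) e^(2\<beta>|k|) is split using
  e^(\<beta>|k|) \<le> e^(\<beta>|j|) e^(\<beta>|k - j|) and |k|^r \<le> 2^r (|j|^r + |k - j|^r), and half of the
  derivative |k - j| contributed by u \<cdot> \<nabla>u is moved onto the other two factors via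
  |k - j|^(1/2) \<le> |k|^(1/2) + |j|^(1/2). Each of the three resulting convolution sums is bounded by
  Young's inequality for l^2 \<times> l^1 \<times> l^2, and the l^1 factor by Cauchy-Schwarz against the
  lattice sum of |l|^(-s) over l \<noteq> 0, which is finite for s > d; this is where r > (d + 1)/2 enters.
\<close>

lemma norm_vec_complex: "norm (v :: complex^'n::finite) = sqrt (\<Sum>i\<in>UNIV. (cmod (v$i))^2)"
  unfolding norm_vec_def L2_set_def by simp

lemma norm_kvec: "norm (kvec k) = wnorm k"
  unfolding norm_vec_complex wnorm_def kvec_def by simp

lemma kvec_add: "kvec (a + b) = kvec a + kvec b"
  unfolding kvec_def by (simp add: vec_eq_iff)

lemma wnorm_nonneg: "0 \<le> wnorm k"
  unfolding norm_kvec[symmetric] by simp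

lemma wnorm_zero [simp]: "wnorm 0 = 0"
  unfolding wnorm_def by simp

lemma wnorm_minus: "wnorm (- k) = wnorm k"
  unfolding wnorm_def by simp

lemma wnorm_triangle: "wnorm (a + b) \<le> wnorm a + wnorm b"
  unfolding norm_kvec[symmetric] kvec_add by (rule norm_triangle_ineq)

lemma abs_component_le_wnorm: "\<bar>real_of_int (k$i)\<bar> \<le> wnorm k"
  using Finite_Cartesian_Product.norm_nth_le[of "kvec k" i] by (simp add: norm_kvec) (simp add: kvec_def)

lemma wnorm_ge_1: "k \<noteq> 0 \<Longrightarrow> 1 \<le> wnorm k"
proof -
  assume "k \<noteq> 0"
  then obtain i where "k$i \<noteq> 0" by (metis vec_eq_iff zero_index)
  then show ?thesis using abs_component_le_wnorm[of k i] by linarith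
qed

lemma norm_vector_scalar_mult: "norm (c *s (v :: complex^'n::finite)) = cmod c * norm v"
proof -
  have "(\<Sum>i\<in>UNIV. (cmod ((c *s v)$i))^2) = (cmod c)^2 * (\<Sum>i\<in>UNIV. (cmod (v$i))^2)"
    by (simp add: norm_mult power_mult_distrib sum_distrib_left)
  then show ?thesis unfolding norm_vec_complex by (simp add: real_sqrt_mult)
qed

lemma norm_kdot_le: "cmod (kdot k w) \<le> wnorm k * norm w"
proof -
  have "cmod (kdot k w) \<le> (\<Sum>i\<in>UNIV. \<bar>real_of_int (k$i)\<bar> * \<bar>cmod (w$i)\<bar>)"
    unfolding kdot_def by (rule order_trans[OF norm_sum]) (simp add: norm_mult)
  also have "\<dots> \<le> L2_set (\<lambda>i. real_of_int (k$i)) UNIV * L2_set (\<lambda>i. cmod (w$i)) UNIV"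
    by (rule L2_set_mult_ineq)
  also have "\<dots> = wnorm k * norm w"
    unfolding wnorm_def norm_vec_def L2_set_def by simp
  finally show ?thesis .
qed

lemma norm_cdot_le: "cmod (cdot v w) \<le> norm v * norm w"
proof -
  have "cmod (cdot v w) \<le> (\<Sum>i\<in>UNIV. \<bar>cmod (v$i)\<bar> * \<bar>cmod (w$i)\<bar>)"
    unfolding cdot_def by (rule order_trans[OF norm_sum]) (simp add: norm_mult)
  also have "\<dots> \<le> L2_set (\<lambda>i. cmod (v$i)) UNIV * L2_set (\<lambda>i. cmod (w$i)) UNIV"
    by (rule L2_set_mult_ineq)
  also have "\<dots> = norm v * norm w"
    unfolding norm_vec_def L2_set_def by simp
  finally show ?thesis .
qed

lemma norm_leray_le: "norm (leray f k) \<le> 2 * norm (f k)"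
proof (cases "k = 0")
  case True
  then show ?thesis by (simp add: leray_def)
next
  case False
  have w1: "1 \<le> wnorm k" by (rule wnorm_ge_1[OF False])
  have "norm ((kdot k (f k) / complex_of_real ((wnorm k)^2)) *s kvec k)
      = cmod (kdot k (f k)) / (wnorm k)^2 * wnorm k"
    by (simp add: norm_vector_scalar_mult norm_kvec norm_divide norm_power)
  also have "\<dots> \<le> wnorm k * norm (f k) / (wnorm k)^2 * wnorm k"
    by (intro mult_right_mono divide_right_mono norm_kdot_le) (auto simp: wnorm_nonneg)
  also have "\<dots> = norm (f k)" using w1 by (simp add: power2_eq_square)
  finally show ?thesis
    using False norm_triangle_ineq4[of "f k" "(kdot k (f k) / complex_of_real ((wnorm k)^2)) *s kvec k"]
    by (simp add: leray_def)
qed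

lemma norm_advect_le:
  assumes "(\<lambda>j. wnorm (k - j) * norm (u j) * norm (v (k - j))) summable_on UNIV"
  shows "norm (advect u v k) \<le> (\<Sum>\<^sub>\<infinity>j. wnorm (k - j) * norm (u j) * norm (v (k - j)))"
proof -
  define t where "t = (\<lambda>j. (\<i> * kdot (k - j) (u j)) *s v (k - j))"
  have t_le: "norm (t j) \<le> wnorm (k - j) * norm (u j) * norm (v (k - j))" for j
    unfolding t_def norm_vector_scalar_mult norm_mult
    by (simp add: mult_right_mono norm_kdot_le)
  have t_summable: "(\<lambda>j. norm (t j)) summable_on UNIV"
    by (rule summable_on_comparison_test[OF assms]) (simp_all add: t_le)
  have "norm (advect u v k) \<le> (\<Sum>\<^sub>\<infinity>j. norm (t j))"
    unfolding advect_def t_def[symmetric] by (rule norm_infsum_bound[OF t_summable])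
  also have "\<dots> \<le> (\<Sum>\<^sub>\<infinity>j. wnorm (k - j) * norm (u j) * norm (v (k - j)))"
    by (rule infsum_mono[OF t_summable assms t_le])
  finally show ?thesis .
qed

lemma norm_Bop_pairing_le:
  assumes "(\<lambda>j. 2 * (wnorm (k - j) * norm (u j) * norm (v (k - j))) * norm w) summable_on UNIV"
  shows "cmod (cdot (Bop u v k) w)
    \<le> (\<Sum>\<^sub>\<infinity>j. 2 * (wnorm (k - j) * norm (u j) * norm (v (k - j))) * norm w)"
proof (cases "w = 0")
  case True
  then show ?thesis by (simp add: cdot_def)
next
  case False
  define T where "T = (\<lambda>j. wnorm (k - j) * norm (u j) * norm (v (k - j)))"
  have "(\<lambda>j. (2 * T j * norm w) * (1 / (2 * norm w))) summable_on UNIV"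
    using assms unfolding T_def by (rule summable_on_cmult_left)
  then have T_summable: "T summable_on UNIV" using False by simp
  have "cmod (cdot (Bop u v k) w) \<le> 2 * norm (advect u v k) * norm w"
    unfolding Bop_def
    by (rule order_trans[OF norm_cdot_le]) (simp add: mult_right_mono norm_leray_le)
  also have "\<dots> \<le> 2 * (\<Sum>\<^sub>\<infinity>j. T j) * norm w"
    using norm_advect_le[OF T_summable[unfolded T_def]] by (simp add: T_def mult_right_mono)
  also have "\<dots> = (\<Sum>\<^sub>\<infinity>j. 2 * T j * norm w)"
    by (simp add: infsum_cmult_left' infsum_cmult_right')
  finally show ?thesis unfolding T_def .
qed

section \<open>Lattice sums\<close>

lemma powr_neg_Suc_le:
  fixes a :: real
  assumes a: "a > 1" and n: "n \<ge> 1"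
  shows "real (Suc n) powr (-a) \<le> (real n powr (1-a) - real (Suc n) powr (1-a)) / (a-1)"
proof -
  have der: "\<And>x. real n \<le> x \<Longrightarrow> x \<le> real (Suc n) \<Longrightarrow>
      DERIV (\<lambda>z. z powr (1-a)) x :> (1-a) * x powr (1-a-1)"
    using n by (intro has_real_derivative_powr) auto
  have "\<exists>z. real n < z \<and> z < real (Suc n) \<and>
      real (Suc n) powr (1-a) - real n powr (1-a) = (real (Suc n) - real n) * ((1-a) * z powr (1-a-1))"
    by (rule MVT2[OF _ der]) auto
  then obtain z where z: "real n < z" "z < real (Suc n)"
    "real (Suc n) powr (1-a) - real n powr (1-a) = (1-a) * z powr (-a)"
    by auto
  have "(a-1) * real (Suc n) powr (-a) \<le> (a-1) * z powr (-a)"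
    using z n a by (intro mult_left_mono powr_mono2') auto
  also have "\<dots> = real n powr (1-a) - real (Suc n) powr (1-a)"
    using z(3) by (simp add: algebra_simps)
  finally show ?thesis using a by (simp add: field_simps)
qed

lemma sum_powr_neg_atLeastAtMost_le:
  fixes a :: real
  assumes a: "a > 1" and M: "M \<ge> 1"
  shows "(\<Sum>n=1..M. real n powr (-a)) \<le> 1 + (1 - real M powr (1-a)) / (a-1)"
  using M
proof (induction M)
  case 0
  then show ?case by simp
next
  case (Suc M)
  show ?case
  proof (cases "M = 0")
    case True
    then show ?thesis by simp
  next
    case False
    have "(\<Sum>n=1..Suc M. real n powr (-a)) = (\<Sum>n=1..M. real n powr (-a)) + real (Suc M) powr (-a)"
      by simp
    also have "\<dots> \<le> 1 + (1 - real M powr (1-a)) / (a-1)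
        + (real M powr (1-a) - real (Suc M) powr (1-a)) / (a-1)"
      using Suc powr_neg_Suc_le[OF a, of M] False by simp
    also have "\<dots> = 1 + (1 - real (Suc M) powr (1-a)) / (a-1)"
      by (simp add: add_divide_distrib[symmetric])
    finally show ?thesis .
  qed
qed

lemma sum_powr_neg_nat_le:
  fixes a :: real
  assumes a: "a > 1" and N: "finite N" "0 \<notin> N"
  shows "(\<Sum>n\<in>N. real n powr (-a)) \<le> 1 + 1 / (a-1)"
proof (cases "N = {}")
  case True
  then show ?thesis using a by simp
next
  case False
  define M where "M = Max N"
  have M: "M \<ge> 1" "N \<subseteq> {1..M}"
    using Max_in[OF N(1) False] Max_ge[OF N(1)] N(2) unfolding M_def
    by (auto simp: Suc_le_eq) (metis gr0I)+
  have "(\<Sum>n\<in>N. real n powr (-a)) \<le> (\<Sum>n=1..M. real n powr (-a))"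
    by (rule sum_mono2[OF _ M(2)]) auto
  also have "\<dots> \<le> 1 + (1 - real M powr (1-a)) / (a-1)"
    by (rule sum_powr_neg_atLeastAtMost_le[OF a M(1)])
  also have "\<dots> \<le> 1 + 1 / (a-1)" using a by (simp add: divide_right_mono)
  finally show ?thesis .
qed

lemma sum_abs_powr_neg_int_le:
  fixes a :: real
  assumes a: "a > 1" and T: "finite T" "0 \<notin> T"
  shows "(\<Sum>t\<in>T. \<bar>real_of_int t\<bar> powr (-a)) \<le> 2 * (1 + 1 / (a-1))"
proof -
  define Tp where "Tp = {t\<in>T. t > 0}"
  define Tm where "Tm = {t\<in>T. t < 0}"
  have T_split: "T = Tp \<union> Tm" "Tp \<inter> Tm = {}" "finite Tp" "finite Tm"
    using T unfolding Tp_def Tm_def by (auto, metis linorder_neqE_linordered_idom)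
  have "(\<Sum>t\<in>Tp. \<bar>real_of_int t\<bar> powr (-a)) = (\<Sum>n\<in>nat ` Tp. real n powr (-a))"
    by (subst sum.reindex) (auto simp: inj_on_def Tp_def intro!: sum.cong)
  also have "\<dots> \<le> 1 + 1/(a-1)" using T_split a by (intro sum_powr_neg_nat_le) (auto simp: Tp_def)
  finally have pos: "(\<Sum>t\<in>Tp. \<bar>real_of_int t\<bar> powr (-a)) \<le> 1 + 1/(a-1)" .
  have "(\<Sum>t\<in>Tm. \<bar>real_of_int t\<bar> powr (-a)) = (\<Sum>n\<in>(\<lambda>t. nat (-t)) ` Tm. real n powr (-a))"
    by (subst sum.reindex) (auto simp: inj_on_def Tm_def intro!: sum.cong)
  also have "\<dots> \<le> 1 + 1/(a-1)" using T_split a by (intro sum_powr_neg_nat_le) (auto simp: Tm_def)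
  finally have neg: "(\<Sum>t\<in>Tm. \<bar>real_of_int t\<bar> powr (-a)) \<le> 1 + 1/(a-1)" .
  show ?thesis using pos neg by (simp add: T_split sum.union_disjoint)
qed

lemma card_slice_le:
  fixes i :: "'n::finite" and t T :: int
  assumes "T \<ge> 0" and S: "S \<subseteq> {l::int^'n. l$i = t \<and> (\<forall>j. \<bar>l$j\<bar> \<le> T)}"
  shows "card S \<le> nat (2*T+1) ^ (CARD('n) - 1)"
proof -
  define B where "B = PiE (UNIV - {i}) (\<lambda>_. {-T..T})"
  define restr where "restr = (\<lambda>l::int^'n. restrict (\<lambda>j. l$j) (UNIV - {i}))"
  have "inj_on restr S"
  proof (rule inj_onI)
    fix x y assume xy: "x \<in> S" "y \<in> S" "restr x = restr y"
    have "x$j = y$j" for j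
    proof (cases "j = i")
      case False
      then show ?thesis using fun_cong[OF xy(3), of j] by (simp add: restr_def)
    qed (use S xy in auto)
    then show "x = y" by (simp add: vec_eq_iff)
  qed
  moreover have "restr l \<in> B" if "l \<in> S" for l
  proof -
    have "\<bar>l$j\<bar> \<le> T" for j using S that by auto
    then show ?thesis unfolding B_def restr_def by (auto simp: abs_le_iff) (meson minus_le_iff)
  qed
  then have "restr ` S \<subseteq> B" by blast
  moreover have "finite B" unfolding B_def by (intro finite_PiE) auto
  ultimately have "card S \<le> card B" by (rule card_inj_on_le)
  also have "card B = nat (2*T+1) ^ (CARD('n) - 1)"
    unfolding B_def using assms by (simp add: card_PiE card_Diff_singleton)
  finally show ?thesis .
qed

text \<open>The slice l_i = t of the cube max_j |l_j| \<le> |t| has at most 3^(d-1) |t|^(d-1) points,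
  which reduces the sum to a one-dimensional zeta sum.\<close>

lemma sum_dominant_coordinate_le:
  fixes G :: "(int^'n::finite) set" and i :: 'n
  assumes s: "s > real CARD('n)" and G: "finite G"
  shows "(\<Sum>l\<in>{l\<in>G. l$i \<noteq> 0 \<and> (\<forall>j. \<bar>l$j\<bar> \<le> \<bar>l$i\<bar>)}. \<bar>real_of_int (l$i)\<bar> powr (-s))
    \<le> 3^(CARD('n)-1) * (2 * (1 + 1/(s - real CARD('n))))"
proof -
  define d where "d = CARD('n)"
  define Gi where "Gi = {l\<in>G. l$i \<noteq> 0 \<and> (\<forall>j. \<bar>l$j\<bar> \<le> \<bar>l$i\<bar>)}"
  define T where "T = (\<lambda>l. l$i) ` Gi"
  have Gi: "finite Gi" using G unfolding Gi_def by auto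
  have T: "finite T" "0 \<notin> T" using Gi unfolding T_def Gi_def by auto
  have slice_le: "real (card {l\<in>Gi. l$i = t}) \<le> 3^(d-1) * \<bar>real_of_int t\<bar> powr (real d - 1)"
    if "t \<in> T" for t
  proof -
    have t: "0 < \<bar>real_of_int t\<bar>" using that T by (cases "t = 0") auto
    have "card {l\<in>Gi. l$i = t} \<le> nat (2*\<bar>t\<bar>+1) ^ (d - 1)"
      unfolding d_def by (rule card_slice_le[where i=i and t=t]) (auto simp: Gi_def)
    then have "real (card {l\<in>Gi. l$i = t}) \<le> real (nat (2*\<bar>t\<bar>+1) ^ (d - 1))"
      by linarith
    also have "\<dots> = (2*\<bar>real_of_int t\<bar>+1) ^ (d - 1)"
      by (simp add: of_nat_power)
    also have "\<dots> \<le> (3*\<bar>real_of_int t\<bar>) ^ (d - 1)"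
      using t by (intro power_mono) (auto simp: of_int_abs[symmetric] simp del: of_int_abs)
    also have "\<dots> = 3^(d-1) * \<bar>real_of_int t\<bar> powr (real d - 1)"
      using t by (simp add: power_mult_distrib powr_realpow[symmetric] of_nat_diff d_def Suc_le_eq)
    finally show ?thesis .
  qed
  have "(\<Sum>l\<in>Gi. \<bar>real_of_int (l$i)\<bar> powr (-s))
      = (\<Sum>t\<in>T. real (card {l\<in>Gi. l$i = t}) * \<bar>real_of_int t\<bar> powr (-s))"
    unfolding T_def by (subst sum.image_gen[OF Gi, where g="\<lambda>l. l$i"]) (auto intro!: sum.cong)
  also have "\<dots> \<le> (\<Sum>t\<in>T. 3^(d-1) * \<bar>real_of_int t\<bar> powr (-(s - real d + 1)))"
  proof (rule sum_mono)
    fix t assume "t \<in> T"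
    then have "real (card {l\<in>Gi. l$i = t}) * \<bar>real_of_int t\<bar> powr (-s)
        \<le> 3^(d-1) * \<bar>real_of_int t\<bar> powr (real d - 1) * \<bar>real_of_int t\<bar> powr (-s)"
      by (intro mult_right_mono slice_le) auto
    also have "\<dots> = 3^(d-1) * \<bar>real_of_int t\<bar> powr (-(s - real d + 1))"
      by (simp add: mult.assoc powr_add[symmetric] algebra_simps)
    finally show "real (card {l\<in>Gi. l$i = t}) * \<bar>real_of_int t\<bar> powr (-s)
        \<le> 3^(d-1) * \<bar>real_of_int t\<bar> powr (-(s - real d + 1))" .
  qed
  also have "\<dots> \<le> 3^(d-1) * (2 * (1 + 1/((s - real d + 1) - 1)))"
    unfolding sum_distrib_left[symmetric]
    using s T by (intro mult_left_mono sum_abs_powr_neg_int_le) (auto simp: d_def)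
  finally show ?thesis by (simp add: Gi_def d_def)
qed

definition lattice_zeta_bound :: "nat \<Rightarrow> real \<Rightarrow> real" where
  "lattice_zeta_bound d s = real (2 * d * 3^(d-1)) * (1 + 1/(s - real d))"

lemma sum_wnorm_powr_neg_le:
  fixes G :: "(int^'n::finite) set"
  assumes s: "s > real CARD('n)" and G: "finite G" "0 \<notin> G"
  shows "(\<Sum>l\<in>G. wnorm l powr (-s)) \<le> lattice_zeta_bound CARD('n) s"
proof -
  define dominant where "dominant = (\<lambda>i (l::int^'n). l$i \<noteq> 0 \<and> (\<forall>j. \<bar>l$j\<bar> \<le> \<bar>l$i\<bar>))"
  define g where "g = (\<lambda>i (l::int^'n). if dominant i l then \<bar>real_of_int (l$i)\<bar> powr (-s) else 0)"
  have wnorm_le: "wnorm l powr (-s) \<le> (\<Sum>i\<in>UNIV. g i l)" if "l \<in> G" for l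
  proof -
    have "Max (range (\<lambda>j. \<bar>l$j\<bar>)) \<in> range (\<lambda>j. \<bar>l$j\<bar>)" by (rule Max_in) auto
    then obtain i where max_i: "Max (range (\<lambda>j. \<bar>l$j\<bar>)) = \<bar>l$i\<bar>" by blast
    have i: "\<forall>j. \<bar>l$j\<bar> \<le> \<bar>l$i\<bar>"
    proof
      fix j
      have "\<bar>l$j\<bar> \<le> Max (range (\<lambda>j. \<bar>l$j\<bar>))" by (rule Max_ge) auto
      then show "\<bar>l$j\<bar> \<le> \<bar>l$i\<bar>" unfolding max_i .
    qed
    have "l \<noteq> 0" using that G by auto
    have "l$i \<noteq> 0"
    proof
      assume "l$i = 0"
      then have "l$j = 0" for j using i[rule_format, of j] by simp
      then show False using \<open>l \<noteq> 0\<close> by (simp add: vec_eq_iff)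
    qed
    then have "wnorm l powr (-s) \<le> g i l"
      unfolding g_def dominant_def using i s abs_component_le_wnorm[of l i]
      by (auto intro!: powr_mono2')
    also have "\<dots> \<le> (\<Sum>i\<in>UNIV. g i l)"
      by (rule member_le_sum) (auto simp: g_def)
    finally show ?thesis .
  qed
  have "(\<Sum>l\<in>G. wnorm l powr (-s)) \<le> (\<Sum>l\<in>G. \<Sum>i\<in>UNIV. g i l)"
    by (intro sum_mono wnorm_le)
  also have "\<dots> = (\<Sum>i\<in>UNIV. \<Sum>l\<in>G. g i l)"
    by (rule sum.swap)
  also have "\<dots> \<le> (\<Sum>i\<in>(UNIV::'n set). 3^(CARD('n)-1) * (2 * (1 + 1/(s - real CARD('n)))))"
  proof (rule sum_mono)
    fix i :: 'n
    show "(\<Sum>l\<in>G. g i l) \<le> 3^(CARD('n)-1) * (2 * (1 + 1/(s - real CARD('n))))"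
      using sum_dominant_coordinate_le[OF s G(1), of i] G(1)
      by (simp add: g_def dominant_def sum.inter_filter[symmetric])
  qed
  also have "\<dots> = lattice_zeta_bound CARD('n) s"
    by (simp add: lattice_zeta_bound_def)
  finally show ?thesis .
qed

section \<open>Convolution sums\<close>

lemma convolution_sum_le:
  fixes f g h :: "'a::ab_group_add \<Rightarrow> real"
  assumes nonneg: "\<And>x. f x \<ge> 0" "\<And>x. g x \<ge> 0" "\<And>x. h x \<ge> 0"
    and f: "\<And>S. finite S \<Longrightarrow> (\<Sum>x\<in>S. (f x)^2) \<le> Ff"
    and h: "\<And>S. finite S \<Longrightarrow> (\<Sum>x\<in>S. (h x)^2) \<le> Hh"
    and g: "\<And>S. finite S \<Longrightarrow> sum g S \<le> Gg"
    and P: "finite P"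
  shows "(\<Sum>(k,j)\<in>P. f k * g j * h (k - j)) \<le> sqrt Ff * sqrt Hh * Gg"
proof -
  define J where "J = snd ` P"
  have J: "finite J" using P unfolding J_def by auto
  have Ff: "0 \<le> Ff" and Hh: "0 \<le> Hh" using f[of "{}"] h[of "{}"] by simp_all
  have fibre_le: "(\<Sum>(k,j')\<in>{p\<in>P. snd p = j}. f k * g j' * h (k - j')) \<le> g j * (sqrt Ff * sqrt Hh)"
    for j
  proof -
    define K where "K = fst ` {p\<in>P. snd p = j}"
    have K: "finite K" using P unfolding K_def by auto
    have "inj_on fst {p\<in>P. snd p = j}" by (auto simp: inj_on_def prod_eq_iff)
    then have "(\<Sum>(k,j')\<in>{p\<in>P. snd p = j}. f k * g j' * h (k - j')) = g j * (\<Sum>k\<in>K. f k * h (k - j))"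
      unfolding K_def by (simp add: sum.reindex sum_distrib_left case_prod_beta mult_ac)
    also have "\<dots> \<le> g j * (L2_set f K * L2_set (\<lambda>k. h (k - j)) K)"
      using L2_set_mult_ineq[of f "\<lambda>k. h (k - j)" K] nonneg by (intro mult_left_mono) auto
    also have "\<dots> \<le> g j * (sqrt Ff * sqrt Hh)"
    proof (intro mult_left_mono mult_mono)
      show "L2_set f K \<le> sqrt Ff" unfolding L2_set_def using f[OF K] by simp
      have "(\<Sum>k\<in>K. (h (k - j))^2) = (\<Sum>m\<in>(\<lambda>k. k - j) ` K. (h m)^2)"
        by (subst sum.reindex) (auto simp: inj_on_def)
      also have "\<dots> \<le> Hh" using K by (intro h) auto
      finally show "L2_set (\<lambda>k. h (k - j)) K \<le> sqrt Hh" unfolding L2_set_def by simp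
    qed (use Ff nonneg in auto)
    finally show ?thesis .
  qed
  have "(\<Sum>(k,j)\<in>P. f k * g j * h (k - j))
      = (\<Sum>j\<in>J. \<Sum>(k,j')\<in>{p\<in>P. snd p = j}. f k * g j' * h (k - j'))"
    unfolding J_def by (rule sum.image_gen[OF P])
  also have "\<dots> \<le> (\<Sum>j\<in>J. g j * (sqrt Ff * sqrt Hh))"
    by (intro sum_mono fibre_le)
  also have "\<dots> \<le> Gg * (sqrt Ff * sqrt Hh)"
    unfolding sum_distrib_right[symmetric] using Ff Hh by (intro mult_right_mono g J) auto
  finally show ?thesis by (simp add: mult_ac)
qed

lemma convolution_sum_le':
  fixes f g h :: "'a::ab_group_add \<Rightarrow> real"
  assumes nonneg: "\<And>x. f x \<ge> 0" "\<And>x. g x \<ge> 0" "\<And>x. h x \<ge> 0"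
    and f: "\<And>S. finite S \<Longrightarrow> (\<Sum>x\<in>S. (f x)^2) \<le> Ff"
    and h: "\<And>S. finite S \<Longrightarrow> (\<Sum>x\<in>S. (h x)^2) \<le> Hh"
    and g: "\<And>S. finite S \<Longrightarrow> sum g S \<le> Gg"
    and P: "finite P"
  shows "(\<Sum>(k,j)\<in>P. f k * h j * g (k - j)) \<le> sqrt Ff * sqrt Hh * Gg"
proof -
  define \<sigma> where "\<sigma> = (\<lambda>(k::'a, j). (k, k - j))"
  have "inj_on \<sigma> P" unfolding \<sigma>_def by (auto simp: inj_on_def)
  then have "(\<Sum>(k,j)\<in>P. f k * h j * g (k - j)) = (\<Sum>(k,j)\<in>\<sigma> ` P. f k * g j * h (k - j))"
    by (subst sum.reindex) (auto simp: \<sigma>_def mult_ac intro!: sum.cong)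
  also have "\<dots> \<le> sqrt Ff * sqrt Hh * Gg"
    using P by (intro convolution_sum_le[OF nonneg f h g]) auto
  finally show ?thesis .
qed

lemma summable_norm_le_double_sum:
  fixes c :: "'a \<Rightarrow> 'c::banach" and F :: "'a \<Rightarrow> 'b \<Rightarrow> real"
  assumes F_nonneg: "\<And>k j. 0 \<le> F k j"
    and F_le: "\<And>P. finite P \<Longrightarrow> (\<Sum>(k,j)\<in>P. F k j) \<le> B"
    and c_le: "\<And>k. F k summable_on UNIV \<Longrightarrow> norm (c k) \<le> (\<Sum>\<^sub>\<infinity>j. F k j)"
  shows "c summable_on UNIV \<and> norm (\<Sum>\<^sub>\<infinity>k. c k) \<le> B"
proof -
  have F: "(\<lambda>(k,j). F k j) summable_on UNIV"
    using F_le F_nonneg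
    by (intro nonneg_bdd_above_summable_on bdd_aboveI2[where M=B]) (auto simp: case_prod_beta)
  have F_Sigma: "(\<lambda>(k,j). F k j) summable_on Sigma UNIV (\<lambda>_. UNIV)" using F by simp
  define G where "G = (\<lambda>k. \<Sum>\<^sub>\<infinity>j. F k j)"
  have G: "G summable_on UNIV"
    unfolding G_def using summable_on_Sigma_banach[OF F_Sigma] by simp
  have c_le_G: "norm (c k) \<le> G k" for k
    unfolding G_def using summable_on_SigmaD1[OF F_Sigma, of k] by (intro c_le) simp
  have c_abs: "(\<lambda>k. norm (c k)) summable_on UNIV"
    by (rule summable_on_comparison_test[OF G]) (auto simp: c_le_G)
  have "norm (\<Sum>\<^sub>\<infinity>k. c k) \<le> (\<Sum>\<^sub>\<infinity>k. norm (c k))" by (rule norm_infsum_bound[OF c_abs])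
  also have "\<dots> \<le> (\<Sum>\<^sub>\<infinity>k. G k)" by (rule infsum_mono[OF c_abs G c_le_G])
  also have "\<dots> = (\<Sum>\<^sub>\<infinity>(k,j). F k j)"
    unfolding G_def using infsum_Sigma'_banach[OF F_Sigma] by simp
  also have "\<dots> \<le> B"
    using F_le by (intro infsum_le_finite_sums[OF F]) (auto simp: case_prod_beta)
  finally show ?thesis using abs_summable_summable[OF c_abs] by simp
qed

section \<open>Gevrey weights\<close>

definition gweight :: "real \<Rightarrow> real \<Rightarrow> (int^'n::finite \<Rightarrow> complex^'n) \<Rightarrow> int^'n \<Rightarrow> real" where
  "gweight \<beta> a u k = wnorm k powr a * (exp (\<beta> * wnorm k) * norm (u k))"

lemma gweight_nonneg: "0 \<le> gweight \<beta> a u k"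
  unfolding gweight_def by simp

lemma gweight_mono: "a \<le> b \<Longrightarrow> gweight \<beta> a u k \<le> gweight \<beta> b u k"
  unfolding gweight_def
  by (cases "k = 0") (auto intro!: mult_right_mono powr_mono wnorm_ge_1)

lemma norm_Apow_expA: "norm (Apow e (expA \<beta> u) k) = gweight \<beta> (2*e) u k"
  unfolding Apow_def expA_def gweight_def by (simp add: norm_vector_scalar_mult norm_mult)

lemma norm_Apow_expA_Apow_quarter:
  "norm (Apow e (expA \<beta> (Apow (1/4) u)) k) = gweight \<beta> (2*e + 1/2) u k"
  unfolding Apow_def expA_def gweight_def
  by (simp add: norm_vector_scalar_mult norm_mult powr_add mult_ac)

lemma sum_gweight_le:
  assumes b: "\<And>S. finite S \<Longrightarrow> (\<Sum>k\<in>S. (gweight \<beta> b u k)^2) \<le> Bb"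
    and s: "2*(b - a) > real CARD('n::finite)" and S: "finite (S :: (int^'n) set)"
  shows "(\<Sum>k\<in>S. gweight \<beta> a u k) \<le> sqrt Bb * sqrt (lattice_zeta_bound CARD('n) (2*(b - a)))"
proof -
  define S' where "S' = S - {0}"
  have S': "finite S'" "0 \<notin> S'" using S unfolding S'_def by auto
  have "(\<Sum>k\<in>S. gweight \<beta> a u k) = (\<Sum>k\<in>S'. gweight \<beta> b u k * wnorm k powr (-(b - a)))"
    unfolding S'_def using S
    by (subst sum.mono_neutral_right[of S "S - {0}"])
      (auto simp: gweight_def powr_add[symmetric] intro!: sum.cong)
  also have "\<dots> \<le> L2_set (gweight \<beta> b u) S' * L2_set (\<lambda>k. wnorm k powr (-(b - a))) S'"
    using L2_set_mult_ineq[of "gweight \<beta> b u" "\<lambda>k. wnorm k powr (-(b - a))" S']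
    by (simp add: gweight_nonneg)
  also have "\<dots> \<le> sqrt Bb * sqrt (lattice_zeta_bound CARD('n) (2*(b - a)))"
  proof (rule mult_mono)
    show "L2_set (gweight \<beta> b u) S' \<le> sqrt Bb" unfolding L2_set_def using b[OF S'(1)] by simp
    have "(\<Sum>k\<in>S'. (wnorm k powr (-(b - a)))^2) = (\<Sum>k\<in>S'. wnorm k powr (-(2*(b - a))))"
      by (intro sum.cong refl) (simp add: power2_eq_square powr_add[symmetric])
    also have "\<dots> \<le> lattice_zeta_bound CARD('n) (2*(b - a))"
      by (rule sum_wnorm_powr_neg_le[OF s S'])
    finally show "L2_set (\<lambda>k. wnorm k powr (-(b - a))) S' \<le> sqrt (lattice_zeta_bound CARD('n) (2*(b - a)))"
      unfolding L2_set_def by simp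
  qed (use b[of "{}"] in \<open>auto simp: L2_set_def intro!: sum_nonneg\<close>)
  finally show ?thesis .
qed

lemma triangle_weight_le:
  fixes a b c r :: real
  assumes nonneg: "0 \<le> a" "0 \<le> b" "0 \<le> c" "0 \<le> r"
    and tri: "c \<le> a + b" "b \<le> c + a"
  shows "b * c powr (2*r) \<le> 2 powr r *
    (c powr r * a powr r * b + c powr (r + 1/2) * b powr (r + 1/2) + c powr r * a powr (1/2) * b powr (r + 1/2))"
proof -
  have "c powr r \<le> (2 * max a b) powr r"
    using nonneg tri by (intro powr_mono2) auto
  also have "\<dots> \<le> 2 powr r * (a powr r + b powr r)"
    using nonneg by (auto simp: powr_mult max_def)
  finally have c_le: "c powr r \<le> 2 powr r * (a powr r + b powr r)" .
  have "b powr (1/2) \<le> (c + a) powr (1/2)"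
    using nonneg tri by (intro powr_mono2) auto
  also have "\<dots> \<le> c powr (1/2) + a powr (1/2)"
    using nonneg by (simp add: powr_half_sqrt sqrt_add_le_add_sqrt)
  finally have b_le: "b powr (1/2) \<le> c powr (1/2) + a powr (1/2)" .
  have b_half: "b powr (1/2) * b powr (1/2) = b"
    using nonneg by (simp add: powr_add[symmetric] powr_one)
  have "b * c powr (2*r) = c powr r * (c powr r * b)"
    by (simp add: powr_add[symmetric] mult_ac)
  also have "\<dots> \<le> c powr r * (2 powr r * (a powr r + b powr r) * b)"
    using c_le nonneg by (intro mult_left_mono mult_right_mono) auto
  also have "\<dots> = 2 powr r * (c powr r * a powr r * b + c powr r * (b powr r * b powr (1/2)) * b powr (1/2))"
    by (simp add: algebra_simps b_half)
  also have "\<dots> \<le> 2 powr r * (c powr r * a powr r * b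
      + c powr r * (b powr r * b powr (1/2)) * (c powr (1/2) + a powr (1/2)))"
    using b_le by (intro mult_left_mono add_left_mono) auto
  also have "\<dots> = 2 powr r *
    (c powr r * a powr r * b + c powr (r + 1/2) * b powr (r + 1/2) + c powr r * a powr (1/2) * b powr (r + 1/2))"
    by (simp add: powr_add algebra_simps)
  finally show ?thesis .
qed

lemma gweight_trilinear_le:
  assumes u0: "u 0 = 0" and \<beta>: "0 \<le> \<beta>" and r: "0 \<le> r"
  shows "wnorm (k - j) * norm (u j) * norm (u (k - j)) * gweight (2*\<beta>) (2*r) u k
    \<le> 2 powr r * (gweight \<beta> r u k * gweight \<beta> r u j * gweight \<beta> 1 u (k - j)
      + gweight \<beta> (r + 1/2) u k * gweight \<beta> 0 u j * gweight \<beta> (r + 1/2) u (k - j)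
      + gweight \<beta> r u k * gweight \<beta> (1/2) u j * gweight \<beta> (r + 1/2) u (k - j))"
    (is "?lhs \<le> ?rhs")
proof (cases "j = 0")
  case True
  then show ?thesis using u0 by (simp add: gweight_nonneg)
next
  case False
  define a b c where "a = wnorm j" and "b = wnorm (k - j)" and "c = wnorm k"
  define V where "V = (\<lambda>l. exp (\<beta> * wnorm l) * norm (u l))"
  have abc: "0 \<le> a" "0 \<le> b" "0 \<le> c" "c \<le> a + b" "b \<le> c + a"
    unfolding a_def b_def c_def using wnorm_triangle[of j "k - j"] wnorm_triangle[of k "- j"]
    by (simp_all add: wnorm_nonneg wnorm_minus)
  have V: "0 \<le> V l" for l unfolding V_def by simp
  have "\<beta> * c \<le> \<beta> * a + \<beta> * b"
    using abc \<beta> by (simp add: distrib_left[symmetric] mult_left_mono)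
  then have exp_le: "exp (2*\<beta> * c) \<le> exp (\<beta> * c) * exp (\<beta> * a) * exp (\<beta> * b)"
    by (simp add: exp_add[symmetric])
  have "?lhs = (b * c powr (2*r) * norm (u j) * norm (u (k - j)) * norm (u k)) * exp (2*\<beta> * c)"
    unfolding gweight_def a_def b_def c_def by (simp add: mult_ac)
  also have "\<dots> \<le> (b * c powr (2*r) * norm (u j) * norm (u (k - j)) * norm (u k))
      * (exp (\<beta> * c) * exp (\<beta> * a) * exp (\<beta> * b))"
    using abc by (intro mult_left_mono exp_le) auto
  also have "\<dots> = (b * c powr (2*r)) * (V k * V j * V (k - j))"
    unfolding V_def a_def b_def c_def by (simp add: mult_ac)
  also have "\<dots> \<le> 2 powr r *
    (c powr r * a powr r * b + c powr (r + 1/2) * b powr (r + 1/2) + c powr r * a powr (1/2) * b powr (r + 1/2))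
    * (V k * V j * V (k - j))"
    using abc r V by (intro mult_right_mono triangle_weight_le) auto
  also have "\<dots> = ?rhs"
    using False abc(2) wnorm_ge_1[OF False]
    unfolding gweight_def V_def a_def b_def c_def by (simp add: algebra_simps)
  finally show ?thesis .
qed

lemma trilinear_finite_sum_le:
  fixes u :: "int^'n::finite \<Rightarrow> complex^'n"
  assumes r: "r > (real CARD('n) + 1) / 2" and \<beta>: "0 \<le> \<beta>" and u0: "u 0 = 0"
    and P2: "\<And>S. finite S \<Longrightarrow> (\<Sum>k\<in>S. (gweight \<beta> r u k)^2) \<le> P2"
    and Q2: "\<And>S. finite S \<Longrightarrow> (\<Sum>k\<in>S. (gweight \<beta> (r + 1/2) u k)^2) \<le> Q2"
    and PQ: "P2 \<le> Q2" and P: "finite P"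
  shows "(\<Sum>(k,j)\<in>P. wnorm (k - j) * norm (u j) * norm (u (k - j)) * gweight (2*\<beta>) (2*r) u k)
    \<le> 3 * 2 powr r * sqrt P2 * Q2 * sqrt (lattice_zeta_bound CARD('n) (2*r - 1))"
proof -
  define X Y where "X = gweight \<beta> r u" and "Y = gweight \<beta> (r + 1/2) u"
  define z1 z2 where "z1 = lattice_zeta_bound CARD('n) (2*r - 1)"
    and "z2 = lattice_zeta_bound CARD('n) (2*r)"
  have P2_nonneg: "0 \<le> P2" using P2[of "{}"] by simp
  have z: "0 \<le> z2" "z2 \<le> z1"
    using r unfolding z1_def z2_def lattice_zeta_bound_def
    by (auto intro!: mult_left_mono divide_left_mono)
  have exponents: "2*((r + 1/2) - 1) = 2*r - 1" "2*(r - 0) = 2*r" "2*((r + 1/2) - 1/2) = 2*r"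
    by simp_all
  have H: "\<And>S. finite S \<Longrightarrow> sum (gweight \<beta> 1 u) S \<le> sqrt Q2 * sqrt z1"
    using sum_gweight_le[OF Q2, of 1, unfolded exponents] r by (simp add: z1_def)
  have V: "\<And>S. finite S \<Longrightarrow> sum (gweight \<beta> 0 u) S \<le> sqrt P2 * sqrt z2"
    using sum_gweight_le[OF P2, of 0, unfolded exponents] r by (simp add: z2_def)
  have W: "\<And>S. finite S \<Longrightarrow> sum (gweight \<beta> (1/2) u) S \<le> sqrt Q2 * sqrt z2"
    using sum_gweight_le[OF Q2, of "1/2", unfolded exponents] r by (simp add: z2_def)
  note young = convolution_sum_le[OF gweight_nonneg gweight_nonneg gweight_nonneg _ _ _ P]
    convolution_sum_le'[OF gweight_nonneg gweight_nonneg gweight_nonneg _ _ _ P]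
  have T1: "(\<Sum>(k,j)\<in>P. X k * X j * gweight \<beta> 1 u (k - j)) \<le> sqrt P2 * sqrt P2 * (sqrt Q2 * sqrt z1)"
    unfolding X_def by (rule young(2)[OF P2 P2 H])
  have T2: "(\<Sum>(k,j)\<in>P. Y k * gweight \<beta> 0 u j * Y (k - j)) \<le> sqrt Q2 * sqrt Q2 * (sqrt P2 * sqrt z2)"
    unfolding Y_def by (rule young(1)[OF Q2 Q2 V])
  have T3: "(\<Sum>(k,j)\<in>P. X k * gweight \<beta> (1/2) u j * Y (k - j)) \<le> sqrt P2 * sqrt Q2 * (sqrt Q2 * sqrt z2)"
    unfolding X_def Y_def by (rule young(1)[OF P2 Q2 W])
  have "(\<Sum>(k,j)\<in>P. wnorm (k - j) * norm (u j) * norm (u (k - j)) * gweight (2*\<beta>) (2*r) u k)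
      \<le> (\<Sum>(k,j)\<in>P. 2 powr r * (X k * X j * gweight \<beta> 1 u (k - j)
        + Y k * gweight \<beta> 0 u j * Y (k - j) + X k * gweight \<beta> (1/2) u j * Y (k - j)))"
    unfolding X_def Y_def using r \<beta> u0
    by (intro sum_mono) (auto intro!: gweight_trilinear_le)
  also have "\<dots> = 2 powr r * ((\<Sum>(k,j)\<in>P. X k * X j * gweight \<beta> 1 u (k - j))
      + (\<Sum>(k,j)\<in>P. Y k * gweight \<beta> 0 u j * Y (k - j))
      + (\<Sum>(k,j)\<in>P. X k * gweight \<beta> (1/2) u j * Y (k - j)))"
    by (simp add: sum_distrib_left sum.distrib case_prod_beta distrib_left)
  also have "\<dots> \<le> 2 powr r * (3 * (sqrt P2 * (sqrt Q2 * sqrt Q2) * sqrt z1))"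
  proof -
    define p q t1 t2 where "p = sqrt P2" and "q = sqrt Q2" and "t1 = sqrt z1" and "t2 = sqrt z2"
    have pq: "0 \<le> p" "p \<le> q" "0 \<le> t2" "t2 \<le> t1"
      using P2_nonneg PQ z unfolding p_def q_def t1_def t2_def by simp_all
    have "p * p * (q * t1) \<le> p * q * q * t1"
      using pq by (simp add: mult_left_mono mult_right_mono mult.assoc)
    moreover have "q * q * (p * t2) \<le> p * q * q * t1"
      using pq by (simp add: mult_left_mono mult_right_mono mult_ac)
    moreover have "p * q * (q * t2) \<le> p * q * q * t1"
      using pq by (simp add: mult_left_mono mult_right_mono mult_ac)
    ultimately show ?thesis
      using T1 T2 T3 unfolding p_def q_def t1_def t2_def by (intro mult_left_mono) (auto simp: mult_ac)
  qed
  also have "\<dots> = 3 * 2 powr r * sqrt P2 * Q2 * sqrt z1"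
    using P2_nonneg PQ by simp
  finally show ?thesis unfolding z1_def .
qed

lemma Bop_pairing_bound:
  fixes u :: "int^'n::finite \<Rightarrow> complex^'n"
  assumes r: "r > (real CARD('n) + 1) / 2" and \<beta>: "0 \<le> \<beta>" and u0: "u 0 = 0"
    and Y: "(\<lambda>k. (gweight \<beta> (r + 1/2) u k)^2) summable_on UNIV"
  shows "(\<lambda>k. cdot (Bop u u k) (Apow r (expA (2*\<beta>) u) k)) summable_on UNIV \<and>
    cmod (\<Sum>\<^sub>\<infinity>k. cdot (Bop u u k) (Apow r (expA (2*\<beta>) u) k))
      \<le> 6 * 2 powr r * sqrt (\<Sum>\<^sub>\<infinity>k. (gweight \<beta> r u k)^2) * (\<Sum>\<^sub>\<infinity>k. (gweight \<beta> (r + 1/2) u k)^2)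
        * sqrt (lattice_zeta_bound CARD('n) (2*r - 1))"
proof -
  have XY: "(gweight \<beta> r u k)^2 \<le> (gweight \<beta> (r + 1/2) u k)^2" for k
    by (intro power_mono gweight_mono gweight_nonneg) simp
  have X: "(\<lambda>k. (gweight \<beta> r u k)^2) summable_on UNIV"
    by (rule summable_on_comparison_test[OF Y]) (auto simp: XY)
  define F where "F = (\<lambda>k j. 2 * (wnorm (k - j) * norm (u j) * norm (u (k - j)))
    * norm (Apow r (expA (2*\<beta>) u) k))"
  show ?thesis
  proof (rule summable_norm_le_double_sum[of F])
    show "0 \<le> F k j" for k j
      unfolding F_def by (simp add: wnorm_nonneg)
    show "cmod (cdot (Bop u u k) (Apow r (expA (2*\<beta>) u) k)) \<le> (\<Sum>\<^sub>\<infinity>j. F k j)"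
      if "F k summable_on UNIV" for k
      using that unfolding F_def by (rule norm_Bop_pairing_le)
    show "(\<Sum>(k,j)\<in>P. F k j) \<le> 6 * 2 powr r * sqrt (\<Sum>\<^sub>\<infinity>k. (gweight \<beta> r u k)^2)
        * (\<Sum>\<^sub>\<infinity>k. (gweight \<beta> (r + 1/2) u k)^2) * sqrt (lattice_zeta_bound CARD('n) (2*r - 1))"
      if "finite P" for P
      using trilinear_finite_sum_le[OF r \<beta> u0 finite_sum_le_infsum[OF X] finite_sum_le_infsum[OF Y]
          infsum_mono[OF X Y XY] that]
      by (simp add: F_def norm_Apow_expA sum_distrib_left[symmetric] case_prod_beta mult_ac)
  qed
qed

lemma gnorm_eq_gweight: "gnorm r \<beta> u = sqrt ((2*pi)^CARD('n) * (\<Sum>\<^sub>\<infinity>k. (gweight \<beta> r u k)^2))"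
  for u :: "int^'n::finite \<Rightarrow> complex^'n"
  unfolding gnorm_def L2norm_def norm_Apow_expA by simp

lemma gnorm_Apow_quarter_eq_gweight:
  "gnorm r \<beta> (Apow (1/4) u) = sqrt ((2*pi)^CARD('n) * (\<Sum>\<^sub>\<infinity>k. (gweight \<beta> (r + 1/2) u k)^2))"
  for u :: "int^'n::finite \<Rightarrow> complex^'n"
  unfolding gnorm_def L2norm_def norm_Apow_expA_Apow_quarter by simp

lemma gfinite_Apow_quarter_iff:
  "gfinite r \<beta> (Apow (1/4) u) \<longleftrightarrow> (\<lambda>k. (gweight \<beta> (r + 1/2) u k)^2) summable_on UNIV"
  unfolding gfinite_def norm_Apow_expA_Apow_quarter by simp

definition trilinear_const :: "nat \<Rightarrow> real" where
  "trilinear_const d = 6 * sqrt (real (2 * d * 3^(d-1))) * pi * 2^(d-1)"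

lemma lattice_zeta_bound_le_CW:
  assumes "r > (real d + 1) / 2"
  shows "6 * sqrt (lattice_zeta_bound d (2*r - 1)) \<le> trilinear_const d * CW d r"
proof -
  define x where "x = 2*r - 1 - real d"
  have x: "x > 0" using assms unfolding x_def by simp
  have zeta: "lattice_zeta_bound d (2*r - 1) = real (2 * d * 3^(d-1)) * (1 + 1/x)"
    unfolding lattice_zeta_bound_def x_def by simp
  have CW: "CW d r = (1 + 1/x) / (pi * 2^(d-1))"
    using x unfolding CW_def x_def by (simp add: field_simps)
  have y: "1 \<le> 1 + 1/x" using x by simp
  have "(1 + 1/x) * 1 \<le> (1 + 1/x) * (1 + 1/x)"
    using y by (intro mult_left_mono) auto
  then have "sqrt (1 + 1/x) \<le> sqrt ((1 + 1/x) * (1 + 1/x))"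
    by (intro real_sqrt_le_mono) simp
  also have "\<dots> = 1 + 1/x" using y by simp
  finally have "sqrt (1 + 1/x) \<le> 1 + 1/x" .
  then show ?thesis
    unfolding zeta CW real_sqrt_mult trilinear_const_def by (simp add: mult_left_mono)
qed

lemma L2inner_Bop_le:
  fixes u :: "int^'n::finite \<Rightarrow> complex^'n"
  assumes r: "r > (real CARD('n) + 1) / 2" and \<beta>: "0 \<le> \<beta>" and u: "in_HC u"
    and Y: "gfinite r \<beta> (Apow (1/4) u)"
  shows "(\<lambda>k. cdot (Bop u u k) (Apow r (expA (2*\<beta>) u) k)) summable_on UNIV"
    and "cmod (L2inner (Bop u u) (Apow r (expA (2*\<beta>) u)))
      \<le> trilinear_const CARD('n) * 2 powr r * CW CARD('n) r * gnorm r \<beta> u * (gnorm r \<beta> (Apow (1/4) u))^2"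
proof -
  define d A P2 Q2 where "d = CARD('n)" and "A = (2*pi)^CARD('n)"
    and "P2 = (\<Sum>\<^sub>\<infinity>k. (gweight \<beta> r u k)^2)" and "Q2 = (\<Sum>\<^sub>\<infinity>k. (gweight \<beta> (r + 1/2) u k)^2)"
  define c where "c = (\<lambda>k. cdot (Bop u u k) (Apow r (expA (2*\<beta>) u) k))"
  have A: "1 \<le> A" unfolding A_def by (rule one_le_power) (use pi_gt3 in simp)
  have PQ: "0 \<le> P2" "0 \<le> Q2" unfolding P2_def Q2_def by (simp_all add: infsum_nonneg)
  have bound: "c summable_on UNIV \<and>
      cmod (\<Sum>\<^sub>\<infinity>k. c k) \<le> 6 * 2 powr r * sqrt P2 * Q2 * sqrt (lattice_zeta_bound d (2*r - 1))"
    unfolding c_def P2_def Q2_def d_def using u \<beta> r Y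
    by (intro Bop_pairing_bound) (simp_all add: in_HC_def gfinite_Apow_quarter_iff)
  have const: "6 * sqrt (lattice_zeta_bound d (2*r - 1)) \<le> trilinear_const d * CW d r * sqrt A"
    using lattice_zeta_bound_le_CW[OF r] mult_left_mono[of 1 "sqrt A" "trilinear_const d * CW d r"] A r
    by (simp add: d_def CW_def trilinear_const_def)
  have "cmod (L2inner (Bop u u) (Apow r (expA (2*\<beta>) u))) = A * cmod (\<Sum>\<^sub>\<infinity>k. c k)"
    unfolding L2inner_def A_def c_def by (simp add: norm_mult norm_power)
  also have "\<dots> \<le> (A * 2 powr r * sqrt P2 * Q2) * (6 * sqrt (lattice_zeta_bound d (2*r - 1)))"
    using bound A by (simp add: mult_left_mono mult_ac)
  also have "\<dots> \<le> (A * 2 powr r * sqrt P2 * Q2) * (trilinear_const d * CW d r * sqrt A)"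
    using const A PQ by (intro mult_left_mono) auto
  also have "\<dots> = trilinear_const d * 2 powr r * CW d r * (sqrt A * sqrt P2) * (A * Q2)"
    by (simp add: mult_ac)
  also have "\<dots> = trilinear_const d * 2 powr r * CW d r * gnorm r \<beta> u * (gnorm r \<beta> (Apow (1/4) u))^2"
    using A PQ unfolding gnorm_Apow_quarter_eq_gweight unfolding gnorm_eq_gweight A_def P2_def Q2_def
    by (simp add: real_sqrt_mult power_mult_distrib)
  finally show "cmod (L2inner (Bop u u) (Apow r (expA (2*\<beta>) u)))
      \<le> trilinear_const CARD('n) * 2 powr r * CW CARD('n) r * gnorm r \<beta> u * (gnorm r \<beta> (Apow (1/4) u))^2"
    unfolding d_def .
  show "(\<lambda>k. cdot (Bop u u k) (Apow r (expA (2*\<beta>) u) k)) summable_on UNIV"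
    using bound unfolding c_def by simp
qed

theorem proposition3p2:
  assumes "CARD('n::finite) \<in> {2, 3}"
  shows "\<exists>C>0. \<forall>r \<beta> (u :: int^'n \<Rightarrow> complex^'n).
     r > (real CARD('n) + 1) / 2 \<longrightarrow> \<beta> > 0 \<longrightarrow> in_HC u \<longrightarrow>
     gfinite r \<beta> (Apow (1/4) u) \<longrightarrow>
       (\<lambda>k. cdot (Bop u u k) (Apow r (expA (2*\<beta>) u) k)) summable_on UNIV \<and>
       cmod (L2inner (Bop u u) (Apow r (expA (2*\<beta>) u)))
         \<le> C * 2 powr r * CW CARD('n) r * gnorm r \<beta> u * (gnorm r \<beta> (Apow (1/4) u))^2"
proof (intro exI conjI allI impI)
  show "trilinear_const CARD('n) > 0"
    unfolding trilinear_const_def by simp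
qed (auto intro: L2inner_Bop_le)

end
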